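(* Let $\mathcal{P}=(|K|,V)$ be a polyhedral model. For all $x\in|K|$ and every SLCS$_\eta$ formula $\Phi$: $\mathcal{P},x\models\Phi$ (SLCS$_\eta$ semantics on polyhedral models) if and only if $\mathbb{F}(\mathcal{P}),\mathbb{F}(x)\models\mathcal{E}(\Phi)$ (SLCS$_\gamma$ semantics on poset models).
   Context: Fix a set PL of proposition letters. A simplex $\sigma\subseteq\mathbb{R}^m$ is the convex hull of $d+1$ affinely independent points $v_0,\dots,v_d$; its faces are the simplices spanned by nonempty subsets of its vertices. Its relative interior (cell) is $\tilde\sigma=\{\sum_i\lambda_iv_i:\lambda_i\in(0,1],\sum_i\lambda_i=1\}$. A simplicial complex $K$ is a finite set of simplices in $\mathbb{R}^m$ closed under faces, any two of which intersect in a common face or in $\emptyset$. Its set of cells $\tilde K=\{\tilde\sigma:\sigma\in K\}$ is partially ordered by $\tilde\sigma_1\preceq\tilde\sigma_2$ iff $\tilde\sigma_1$ is contained in the topological closure of $\tilde\sigma_2$ (equivalently, $\sigma_1$ is a face of $\sigma_2$). The polyhedron $|K|$ is the union of the simplices of $K$ with the subspace topology; its cells partition $|K|$. A polyhedral model is $\mathcal{P}=(|K|,V)$ with $V:\mathrm{PL}\to\mathcal{P}(|K|)$ such that each $V(p)$ is a union of cells. Its cell poset model is $\mathbb{F}(\mathcal{P})=(\tilde K,\preceq,\mathcal{V})$ with $\tilde\sigma\in\mathcal{V}(p)$ iff $\tilde\sigma\subseteq V(p)$; for $x\in|K|$, $\mathbb{F}(x)$ is the unique cell containing $x$. A topological path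 from $x$ is a continuous $\pi:[0,1]\to|K|$ with $\pi(0)=x$. In a poset $(W,\preceq)$ a $\pm$-path of length $\ell\ge2$ from $w$ is $\pi:\{0,\dots,\ell\}\to W$ with $\pi(0)=w$, consecutive elements comparable under $\preceq$, $\pi(0)\preceq\pi(1)$ and $\pi(\ell)\preceq\pi(\ell-1)$. Formulas: $\Phi::=p\mid\neg\Phi\mid\Phi_1\wedge\Phi_2\mid M(\Phi_1,\Phi_2)$, $M=\eta$ for SLCS$_\eta$, $M=\gamma$ for SLCS$_\gamma$. On polyhedral models: $x\models p$ iff $x\in V(p)$; $x\models\gamma(\Phi_1,\Phi_2)$ iff some topological path $\pi$ from $x$ has $\pi(1)\models\Phi_2$ and $\pi(r)\models\Phi_1$ for all $r\in(0,1)$; $x\models\eta(\Phi_1,\Phi_2)$ iff the same with $r\in[0,1)$. On poset models $(W,\preceq,\mathcal{V})$: $w\models p$ iff $w\in\mathcal{V}(p)$; $w\models\gamma(\Phi_1,\Phi_2)$ iff some $\pm$-path $\pi$ of length $\ell$ from $w$ has $\pi(\ell)\models\Phi_2$ and $\pi(i)\models\Phi_1$ for $0<i<\ell$; $w\models\eta(\Phi_1,\Phi_2)$ iff the same with $0\le i<\ell$. Negation and conjunction are standard. The encoding $\mathcal{E}$: $\mathcal{E}(p)=p$, $\mathcal{E}(\neg\Phi)=\neg\mathcal{E}(\Phi)$, $\mathcal{E}(\Phi_1\wedge\Phi_2)=\mathcal{E}(\Phi_1)\wedge\mathcal{E}(\Phi_2)$, $\mathcal{E}(\eta(\Phi_1,\Phi_2))=\mathcal{E}(\Phi_1)\wedge\gamma(\mathcal{E}(\Phi_1),\mathcal{E}(\Phi_2))$.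 *)

theory Defs
  imports "HOL-Analysis.Analysis"
begin

text \<open>A simplex is represented by its (finite, nonempty, affinely independent) vertex set S;
  the simplex itself is convex hull S.\<close>

definition simplex_vertices :: "'a::euclidean_space set \<Rightarrow> bool" where
  "simplex_vertices S \<longleftrightarrow> finite S \<and> S \<noteq> {} \<and> \<not> affine_dependent S"

definition simplicial_complex :: "'a::euclidean_space set set \<Rightarrow> bool" where
  "simplicial_complex K \<longleftrightarrow>
     finite K \<and>
     (\<forall>S\<in>K. simplex_vertices S) \<and>
     (\<forall>S\<in>K. \<forall>T. T \<subseteq> S \<and> T \<noteq> {} \<longrightarrow> T \<in> K) \<and>
     (\<forall>S\<in>K. \<forall>T\<in>K. convex hull S \<inter> convex hull T = {} \<or>
        (\<exists>U. U \<noteq> {} \<and> U \<subseteq> S \<and> U \<subseteq> T \<and> convex hull S \<inter> convex hull T = convex hull U))"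

definition cell :: "'a::euclidean_space set \<Rightarrow> 'a set" where
  "cell S = {x. \<exists>l. (\<forall>v\<in>S. 0 < l v \<and> l v \<le> 1) \<and> sum l S = 1 \<and> (\<Sum>v\<in>S. l v *\<^sub>R v) = x}"

definition polyhedron :: "'a::euclidean_space set set \<Rightarrow> 'a set" where
  "polyhedron K = \<Union> ((\<lambda>S. convex hull S) ` K)"

definition cells :: "'a::euclidean_space set set \<Rightarrow> 'a set set" where
  "cells K = cell ` K"

definition cell_le :: "'a::euclidean_space set \<Rightarrow> 'a set \<Rightarrow> bool" where
  "cell_le c1 c2 \<longleftrightarrow> c1 \<subseteq> closure c2"

definition polyhedral_model :: "'a::euclidean_space set set \<Rightarrow> ('p \<Rightarrow> 'a set) \<Rightarrow> bool" where
  "polyhedral_model K V \<longleftrightarrow> simplicial_complex K \<and>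
     (\<forall>p. \<exists>C. C \<subseteq> cells K \<and> V p = \<Union>C)"

text \<open>Valuation of the cell poset model F(P).\<close>
definition cell_val :: "'a::euclidean_space set set \<Rightarrow> ('p \<Rightarrow> 'a set) \<Rightarrow> 'p \<Rightarrow> 'a set set" where
  "cell_val K V p = {c \<in> cells K. c \<subseteq> V p}"

definition cell_of :: "'a::euclidean_space set set \<Rightarrow> 'a \<Rightarrow> 'a set" where
  "cell_of K x = (THE c. c \<in> cells K \<and> x \<in> c)"

datatype 'p form =
    Atom 'p
  | Neg "'p form"
  | Conj "'p form" "'p form"
  | Eta "'p form" "'p form"
  | Gamma "'p form" "'p form"

fun eta_formula :: "'p form \<Rightarrow> bool" where
  "eta_formula (Atom p) = True"
| "eta_formula (Neg f) = eta_formula f"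
| "eta_formula (Conj f g) = (eta_formula f \<and> eta_formula g)"
| "eta_formula (Eta f g) = (eta_formula f \<and> eta_formula g)"
| "eta_formula (Gamma f g) = False"

text \<open>Encoding E (on SLCS_eta formulas; gamma is mapped homomorphically for totality).\<close>
fun enc :: "'p form \<Rightarrow> 'p form" where
  "enc (Atom p) = Atom p"
| "enc (Neg f) = Neg (enc f)"
| "enc (Conj f g) = Conj (enc f) (enc g)"
| "enc (Eta f g) = Conj (enc f) (Gamma (enc f) (enc g))"
| "enc (Gamma f g) = Gamma (enc f) (enc g)"

definition top_path :: "'a::euclidean_space set set \<Rightarrow> 'a \<Rightarrow> (real \<Rightarrow> 'a) \<Rightarrow> bool" where
  "top_path K x \<pi> \<longleftrightarrow> continuous_on {0..1} \<pi> \<and> \<pi> ` {0..1} \<subseteq> polyhedron K \<and> \<pi> 0 = x"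

fun sat_poly :: "'a::euclidean_space set set \<Rightarrow> ('p \<Rightarrow> 'a set) \<Rightarrow> 'a \<Rightarrow> 'p form \<Rightarrow> bool" where
  "sat_poly K V x (Atom p) = (x \<in> V p)"
| "sat_poly K V x (Neg f) = (\<not> sat_poly K V x f)"
| "sat_poly K V x (Conj f g) = (sat_poly K V x f \<and> sat_poly K V x g)"
| "sat_poly K V x (Gamma f g) = (\<exists>\<pi>. top_path K x \<pi> \<and> sat_poly K V (\<pi> 1) g \<and>
       (\<forall>r\<in>{0<..<1}. sat_poly K V (\<pi> r) f))"
| "sat_poly K V x (Eta f g) = (\<exists>\<pi>. top_path K x \<pi> \<and> sat_poly K V (\<pi> 1) g \<and>
       (\<forall>r\<in>{0..<1}. sat_poly K V (\<pi> r) f))"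

definition pm_path :: "'w set \<Rightarrow> ('w \<Rightarrow> 'w \<Rightarrow> bool) \<Rightarrow> 'w \<Rightarrow> nat \<Rightarrow> (nat \<Rightarrow> 'w) \<Rightarrow> bool" where
  "pm_path W le w l \<pi> \<longleftrightarrow> 2 \<le> l \<and> \<pi> 0 = w \<and> (\<forall>i\<le>l. \<pi> i \<in> W) \<and>
     (\<forall>i<l. le (\<pi> i) (\<pi> (Suc i)) \<or> le (\<pi> (Suc i)) (\<pi> i)) \<and>
     le (\<pi> 0) (\<pi> 1) \<and> le (\<pi> l) (\<pi> (l - 1))"

fun sat_poset :: "'w set \<Rightarrow> ('w \<Rightarrow> 'w \<Rightarrow> bool) \<Rightarrow> ('p \<Rightarrow> 'w set) \<Rightarrow> 'w \<Rightarrow> 'p form \<Rightarrow> bool" where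
  "sat_poset W le V w (Atom p) = (w \<in> V p)"
| "sat_poset W le V w (Neg f) = (\<not> sat_poset W le V w f)"
| "sat_poset W le V w (Conj f g) = (sat_poset W le V w f \<and> sat_poset W le V w g)"
| "sat_poset W le V w (Gamma f g) = (\<exists>l \<pi>. pm_path W le w l \<pi> \<and> sat_poset W le V (\<pi> l) g \<and>
       (\<forall>i. 0 < i \<and> i < l \<longrightarrow> sat_poset W le V (\<pi> i) f))"
| "sat_poset W le V w (Eta f g) = (\<exists>l \<pi>. pm_path W le w l \<pi> \<and> sat_poset W le V (\<pi> l) g \<and>
       (\<forall>i. i < l \<longrightarrow> sat_poset W le V (\<pi> i) f))"

end

theory Submission
  imports Defs
begin

text \<open>Truth of every formula is constant on cells, so only the passage between a path in the
  polyhedron and a \<open>\<plusminus>\<close>-path of cells needs work. A \<open>\<plusminus>\<close>-path lifts to a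
  topological path made of straight segments: the relative interior of a simplex absorbs every
  half-open segment from a point of its closure, so each segment stays inside the two cells it
  joins, and the last one stays in the penultimate cell. Conversely, \<open>\<pi>[0,1)\<close> is connected,
  so the finitely many cells it meets are linked by a zigzag of comparable cells, and \<open>\<pi>(1)\<close>
  lies in the closure of one of them, which makes its cell the final, downward step. The extra
  conjunct in the encoding of \<open>\<eta>\<close> accounts for the condition at \<open>\<pi>(0)\<close>.\<close>

lemma simplicial_complex_simplex:
  "simplicial_complex K \<Longrightarrow> S \<in> K \<Longrightarrow> S \<noteq> {} \<and> \<not> affine_dependent S"
  unfolding simplicial_complex_def simplex_vertices_def by blast

lemma simplicial_complex_face:
  "simplicial_complex K \<Longrightarrow> S \<in> K \<Longrightarrow> T \<subseteq> S \<Longrightarrow> T \<noteq> {} \<Longrightarrow> T \<in> K"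
  unfolding simplicial_complex_def by blast

lemma simplicial_complex_inter:
  "simplicial_complex K \<Longrightarrow> S \<in> K \<Longrightarrow> T \<in> K \<Longrightarrow> convex hull S \<inter> convex hull T = {} \<or>
     (\<exists>U. U \<noteq> {} \<and> U \<subseteq> S \<and> U \<subseteq> T \<and> convex hull S \<inter> convex hull T = convex hull U)"
  unfolding simplicial_complex_def by blast

lemma finite_cells: "simplicial_complex K \<Longrightarrow> finite (cells K)"
  by (simp add: simplicial_complex_def cells_def)

lemma cell_eq_rel_interior:
  fixes S :: "'a::euclidean_space set"
  assumes S: "\<not> affine_dependent S"
  shows "cell S = rel_interior (convex hull S)"
  unfolding rel_interior_convex_hull_explicit[OF S] cell_def
proof safe
  fix u :: "'a \<Rightarrow> real" assume u: "\<forall>x\<in>S. 0 < u x" "sum u S = 1"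
  have "u v \<le> 1" if "v \<in> S" for v
  proof -
    have "u v \<le> sum u S"
      using that u aff_independent_finite[OF S] by (intro member_le_sum) auto
    then show ?thesis using u by simp
  qed
  then show "\<exists>l. (\<forall>v\<in>S. 0 < l v \<and> l v \<le> 1) \<and> sum l S = 1 \<and>
      (\<Sum>v\<in>S. l v *\<^sub>R v) = (\<Sum>x\<in>S. u x *\<^sub>R x)"
    using u by blast
qed blast

lemma cell_subset_convex_hull:
  "\<not> affine_dependent S \<Longrightarrow> cell S \<subseteq> convex hull S"
  using cell_eq_rel_interior rel_interior_subset by blast

lemma closure_cell:
  assumes "\<not> affine_dependent S"
  shows "closure (cell S) = convex hull S"
  using convex_closure_rel_interior[of "convex hull S"] aff_independent_finite[OF assms]
  by (simp add: cell_eq_rel_interior[OF assms] finite_imp_compact)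

lemma cell_eq_empty_iff:
  "\<not> affine_dependent S \<Longrightarrow> cell S = {} \<longleftrightarrow> S = {}"
  by (simp add: cell_eq_rel_interior rel_interior_eq_empty)

lemma affine_independent_convex_hull_eq_imp_eq:
  fixes S T :: "'a::euclidean_space set"
  assumes "\<not> affine_dependent S" "\<not> affine_dependent T" "convex hull S = convex hull T"
  shows "S = T"
proof -
  have "x \<in> S \<longleftrightarrow> x \<in> T" for x
    using extreme_point_of_convex_hull_affine_independent[OF assms(1), of x]
      extreme_point_of_convex_hull_affine_independent[OF assms(2), of x] assms(3) by simp
  then show ?thesis by blast
qed

text \<open>The two simplices meet in the hull of a common face; that face meets the relative interior
  of the hull of \<open>T\<close>, so it is all of \<open>T\<close>.\<close>

lemma simplex_subset_if_cell_meets_convex_hull: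
  assumes K: "simplicial_complex K" and S: "S \<in> K" and T: "T \<in> K"
    and y: "y \<in> cell T" "y \<in> convex hull S"
  shows "T \<subseteq> S"
proof -
  have indT: "\<not> affine_dependent T" using simplicial_complex_simplex[OF K T] by blast
  have "y \<in> convex hull T" using cell_subset_convex_hull[OF indT] y by blast
  then obtain U where U: "U \<subseteq> S" "U \<subseteq> T" "convex hull S \<inter> convex hull T = convex hull U"
    using simplicial_complex_inter[OF K S T] y by blast
  have "convex hull U face_of convex hull T"
    using face_of_convex_hull_affine_independent[OF indT] U(2) by blast
  moreover have "convex hull U \<inter> rel_interior (convex hull T) \<noteq> {}"
    using y U(3) \<open>y \<in> convex hull T\<close> cell_eq_rel_interior[OF indT] by blast
  ultimately have "convex hull U = convex hull T"
    by (meson face_of_disjoint_rel_interior)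
  then have "U = T"
    by (rule affine_independent_convex_hull_eq_imp_eq[OF affine_independent_subset[OF indT U(2)] indT])
  with U(1) show ?thesis by blast
qed

lemma cells_disjoint:
  assumes K: "simplicial_complex K" and "S \<in> K" "T \<in> K" "y \<in> cell S" "y \<in> cell T"
  shows "S = T"
proof -
  have "y \<in> convex hull S" "y \<in> convex hull T"
    using assms cell_subset_convex_hull simplicial_complex_simplex[OF K] by blast+
  then show ?thesis
    using simplex_subset_if_cell_meets_convex_hull[OF K] assms by blast
qed

lemma cell_of_eq:
  assumes K: "simplicial_complex K" and c: "c \<in> cells K" and y: "y \<in> c"
  shows "cell_of K y = c"
  unfolding cell_of_def
proof (rule the_equality)
  show "c \<in> cells K \<and> y \<in> c" using c y by blast
next
  fix d assume "d \<in> cells K \<and> y \<in> d"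
  then show "d = c" using c y cells_disjoint[OF K] unfolding cells_def by blast
qed

text \<open>The cell of a point of a simplex is spanned by the vertices carrying positive barycentric
  coordinates.\<close>

lemma polyhedron_subset_Union_cells:
  assumes K: "simplicial_complex K"
  shows "polyhedron K \<subseteq> \<Union> (cells K)"
proof
  fix x assume "x \<in> polyhedron K"
  then obtain S where S: "S \<in> K" "x \<in> convex hull S" unfolding polyhedron_def by blast
  have fin: "finite S" using simplicial_complex_simplex[OF K S(1)] aff_independent_finite by blast
  obtain u where u: "\<forall>v\<in>S. 0 \<le> u v" "sum u S = 1" "(\<Sum>v\<in>S. u v *\<^sub>R v) = x"
    using S(2) convex_hull_finite[OF fin] by blast
  define T where "T = {v\<in>S. u v \<noteq> 0}"
  have TS: "T \<subseteq> S" by (auto simp: T_def)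
  have "sum u S = sum u T" "(\<Sum>v\<in>S. u v *\<^sub>R v) = (\<Sum>v\<in>T. u v *\<^sub>R v)"
    using fin TS by (auto intro: sum.mono_neutral_right simp: T_def)
  then have sum_T: "sum u T = 1" and x_T: "(\<Sum>v\<in>T. u v *\<^sub>R v) = x"
    using u(2,3) by simp_all
  have "u v \<le> 1" if "v \<in> T" for v
  proof -
    have "u v \<le> sum u T"
      using that u(1) TS fin by (intro member_le_sum) (auto intro: finite_subset)
    then show ?thesis using sum_T by simp
  qed
  then have "x \<in> cell T"
    unfolding cell_def using u(1) sum_T x_T by (intro CollectI exI[of _ u]) (auto simp: T_def)
  moreover have "T \<noteq> {}" using sum_T by auto
  then have "T \<in> K" using simplicial_complex_face[OF K S(1) TS] by blast
  ultimately show "x \<in> \<Union> (cells K)" unfolding cells_def by blast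
qed

lemma cell_of_polyhedron:
  assumes K: "simplicial_complex K" and x: "x \<in> polyhedron K"
  shows "cell_of K x \<in> cells K" "x \<in> cell_of K x"
  using polyhedron_subset_Union_cells[OF K] x cell_of_eq[OF K] by auto

lemma cells_subset_polyhedron:
  "simplicial_complex K \<Longrightarrow> c \<in> cells K \<Longrightarrow> c \<subseteq> polyhedron K"
  using cell_subset_convex_hull simplicial_complex_simplex
  unfolding cells_def polyhedron_def by blast

lemma cells_nonempty:
  "simplicial_complex K \<Longrightarrow> c \<in> cells K \<Longrightarrow> c \<noteq> {}"
  using cell_eq_empty_iff simplicial_complex_simplex unfolding cells_def by blast

lemma cell_le_refl: "cell_le c c"
  using closure_subset by (auto simp: cell_le_def)

lemma cell_le_if_meets_closure:
  assumes K: "simplicial_complex K" and c: "c \<in> cells K" and d: "d \<in> cells K"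
    and y: "y \<in> c" "y \<in> closure d"
  shows "cell_le c d"
proof -
  obtain S T where S: "S \<in> K" "d = cell S" and T: "T \<in> K" "c = cell T"
    using c d unfolding cells_def by blast
  have indS: "\<not> affine_dependent S" and indT: "\<not> affine_dependent T"
    using simplicial_complex_simplex[OF K S(1)] simplicial_complex_simplex[OF K T(1)] by auto
  have "T \<subseteq> S"
    using simplex_subset_if_cell_meets_convex_hull[OF K S(1) T(1)] y S T closure_cell[OF indS]
    by simp
  then have "c \<subseteq> convex hull S" using cell_subset_convex_hull[OF indT] T hull_mono by blast
  then show ?thesis unfolding cell_le_def using S closure_cell[OF indS] by simp
qed

lemma linepath_in_upper_cell:
  assumes K: "simplicial_complex K" and d: "d \<in> cells K" and le: "cell_le c d"
    and a: "a \<in> c" and b: "b \<in> d" and t: "0 < t" "t \<le> 1"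
  shows "linepath a b t \<in> d"
proof -
  obtain S where S: "S \<in> K" "d = cell S" using d unfolding cells_def by blast
  have indS: "\<not> affine_dependent S" using simplicial_complex_simplex[OF K S(1)] by blast
  have "a \<in> closure (convex hull S)"
    using le a S closure_cell[OF indS] closure_subset unfolding cell_le_def by blast
  then have "a - t *\<^sub>R (a - b) \<in> rel_interior (convex hull S)"
    using b S cell_eq_rel_interior[OF indS] t
    by (intro rel_interior_closure_convex_shrink) auto
  then show ?thesis
    using S cell_eq_rel_interior[OF indS] by (simp add: linepath_def algebra_simps)
qed

lemma linepath_in_lower_cell:
  assumes "simplicial_complex K" "c \<in> cells K" "cell_le d c" "a \<in> c" "b \<in> d" "0 \<le> t" "t < 1"
  shows "linepath a b t \<in> c"
  using linepath_in_upper_cell[OF assms(1-3,5,4), of "1 - t"] assms(6,7)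
  by (simp add: linepath_def algebra_simps)

lemma linepath_in_comparable_cells:
  assumes K: "simplicial_complex K" and c: "c \<in> cells K" and d: "d \<in> cells K"
    and cmp: "cell_le c d \<or> cell_le d c" and a: "a \<in> c" and b: "b \<in> d"
    and t: "0 \<le> t" "t \<le> 1"
  shows "linepath a b t \<in> c \<union> d"
proof (cases "t = 0 \<or> t = 1")
  case True then show ?thesis using a b by (auto simp: linepath_def)
next
  case False
  then show ?thesis
    using t cmp linepath_in_upper_cell[OF K d _ a b] linepath_in_lower_cell[OF K c _ a b] by auto
qed

lemma top_path_iff:
  "top_path K x \<pi> \<longleftrightarrow> path \<pi> \<and> path_image \<pi> \<subseteq> polyhedron K \<and> pathstart \<pi> = x"
  by (simp add: top_path_def path_def path_image_def pathstart_def)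

definition eta_reach :: "'a::euclidean_space set set \<Rightarrow> ('a \<Rightarrow> bool) \<Rightarrow> 'a \<Rightarrow> 'a \<Rightarrow> bool" where
  "eta_reach K F x y \<longleftrightarrow> (\<exists>\<pi>. top_path K x \<pi> \<and> \<pi> 1 = y \<and> (\<forall>r\<in>{0..<1}. F (\<pi> r)))"

lemma sat_poly_Eta_iff:
  "sat_poly K V x (Eta f g) \<longleftrightarrow> (\<exists>y. eta_reach K (\<lambda>y. sat_poly K V y f) x y \<and> sat_poly K V y g)"
  by (auto simp: eta_reach_def)

lemma eta_reach_refl: "x \<in> polyhedron K \<Longrightarrow> F x \<Longrightarrow> eta_reach K F x x"
  unfolding eta_reach_def top_path_def by (intro exI[of _ "\<lambda>_. x"]) auto

lemma eta_reach_start: "eta_reach K F x y \<Longrightarrow> F x"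
  unfolding eta_reach_def top_path_def by force

lemma eta_reach_polyhedron: "eta_reach K F x y \<Longrightarrow> y \<in> polyhedron K"
  unfolding eta_reach_def top_path_def by force

lemma eta_reach_join:
  assumes xy: "eta_reach K F x y" and g: "path g" "pathstart g = y" "path_image g \<subseteq> polyhedron K"
    and F: "\<forall>r\<in>{0..<1}. F (g r)"
  shows "eta_reach K F x (pathfinish g)"
proof -
  obtain \<pi> where \<pi>: "top_path K x \<pi>" "\<pi> 1 = y" "\<forall>r\<in>{0..<1}. F (\<pi> r)"
    using xy unfolding eta_reach_def by blast
  have fin: "pathfinish \<pi> = pathstart g" using \<pi>(2) g(2) by (simp add: pathfinish_def)
  have "top_path K x (\<pi> +++ g)"
    using \<pi>(1) g fin path_image_join[OF fin] by (simp add: top_path_iff)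
  moreover have "F ((\<pi> +++ g) r)" if r: "r \<in> {0..<1}" for r
  proof (cases "2 * r < 1")
    case True then show ?thesis using \<pi>(3) r by (simp add: joinpaths_def)
  next
    case False
    then consider "r = 1/2" | "1/2 < r" by linarith
    then show ?thesis
    proof cases
      case 1
      have "F (g 0)" using F by simp
      then show ?thesis unfolding 1 using \<pi>(2) g(2) by (simp add: joinpaths_def pathstart_def)
    next
      case 2
      then show ?thesis using F r by (simp add: joinpaths_def)
    qed
  qed
  ultimately show ?thesis
    unfolding eta_reach_def by (intro exI[of _ "\<pi> +++ g"]) (auto simp: joinpaths_def pathfinish_def)
qed

lemma eta_reach_of_pm_path:
  assumes K: "simplicial_complex K" and x: "x \<in> polyhedron K"
    and pm: "pm_path (cells K) cell_le (cell_of K x) l \<rho>"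
    and F: "\<And>i y. i < l \<Longrightarrow> y \<in> \<rho> i \<Longrightarrow> F y"
    and z: "z \<in> \<rho> l"
  shows "eta_reach K F x z"
proof -
  have l: "2 \<le> l" and \<rho>0: "\<rho> 0 = cell_of K x" and \<rho>: "\<And>i. i \<le> l \<Longrightarrow> \<rho> i \<in> cells K"
    and cmp: "\<And>i. i < l \<Longrightarrow> cell_le (\<rho> i) (\<rho> (Suc i)) \<or> cell_le (\<rho> (Suc i)) (\<rho> i)"
    and down: "cell_le (\<rho> l) (\<rho> (l - 1))"
    using pm unfolding pm_path_def by auto
  have step: "eta_reach K F x b"
    if xy: "eta_reach K F x y" and i: "i < l" and y: "y \<in> \<rho> i" and b: "b \<in> \<rho> (Suc i)"
      and seg: "\<forall>t\<in>{0..<1}. \<exists>j<l. linepath y b t \<in> \<rho> j" for y b i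
  proof -
    have "linepath y b t \<in> polyhedron K" if "t \<in> {0..1}" for t
      using linepath_in_comparable_cells[OF K \<rho>[of i] \<rho>[of "Suc i"] cmp[OF i] y b] that i
        cells_subset_polyhedron[OF K \<rho>[of i]] cells_subset_polyhedron[OF K \<rho>[of "Suc i"]]
      by auto
    then have "path_image (linepath y b) \<subseteq> polyhedron K" by (auto simp: path_image_def)
    moreover have "\<forall>t\<in>{0..<1}. F (linepath y b t)" using seg F by blast
    ultimately show ?thesis
      using eta_reach_join[OF xy, of "linepath y b"] by simp
  qed
  have reach: "\<exists>y\<in>\<rho> i. eta_reach K F x y" if "i < l" for i
    using that
  proof (induction i)
    case 0
    have "x \<in> \<rho> 0" using cell_of_polyhedron[OF K x] \<rho>0 by simp
    then show ?case using eta_reach_refl[OF x] F[of 0 x] l by auto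
  next
    case (Suc i)
    then obtain y where y: "y \<in> \<rho> i" "eta_reach K F x y" by auto
    obtain b where b: "b \<in> \<rho> (Suc i)" using cells_nonempty[OF K \<rho>] Suc.prems by fastforce
    have "\<exists>j<l. linepath y b t \<in> \<rho> j" if "t \<in> {0..<1}" for t
    proof -
      have "linepath y b t \<in> \<rho> i \<union> \<rho> (Suc i)"
        using linepath_in_comparable_cells[OF K \<rho>[of i] \<rho>[of "Suc i"] cmp[of i] y(1) b]
          that Suc.prems by simp
      then show ?thesis using Suc.prems Suc_lessD by blast
    qed
    then show ?case using step[OF y(2) _ y(1) b] Suc.prems b by auto
  qed
  obtain y where y: "y \<in> \<rho> (l - 1)" "eta_reach K F x y" using reach[of "l - 1"] l by auto
  have "\<exists>j<l. linepath y z t \<in> \<rho> j" if "t \<in> {0..<1}" for t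
    using linepath_in_lower_cell[OF K \<rho>[of "l - 1"] down y(1) z] that l
    by (intro exI[of _ "l - 1"]) auto
  then show ?thesis using step[OF y(2) _ y(1), of z] z l by simp
qed

definition comparable_in :: "('w \<Rightarrow> 'w \<Rightarrow> bool) \<Rightarrow> 'w set \<Rightarrow> 'w \<Rightarrow> 'w \<Rightarrow> bool" where
  "comparable_in le C c d \<longleftrightarrow> c \<in> C \<and> d \<in> C \<and> (le c d \<or> le d c)"

lemma pm_path_of_zigzag:
  assumes zigzag: "(comparable_in le C)\<^sup>*\<^sup>* a d" and a: "a \<in> C" "le a a"
    and C: "C \<subseteq> W" and e: "e \<in> W" "le e d"
  shows "\<exists>l \<rho>. pm_path W le a l \<rho> \<and> \<rho> l = e \<and> (\<forall>i. 0 < i \<and> i < l \<longrightarrow> \<rho> i \<in> C)"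
proof -
  obtain n f where f: "f 0 = a" "f n = d" "\<forall>i<n. comparable_in le C (f i) (f (Suc i))"
    using zigzag by (auto simp: rtranclp_power relpowp_fun_conv)
  have fC: "f i \<in> C" if "i \<le> n" for i
    using that f(1,3) a(1) by (cases i) (auto simp: comparable_in_def)
  \<comment> \<open>\<open>a\<close> is repeated because a \<open>\<plusminus>\<close>-path must begin with an upward step\<close>
  define \<rho> where "\<rho> i = (if i = 0 then a else if i \<le> Suc n then f (i - 1) else e)" for i
  have "pm_path W le a (Suc (Suc n)) \<rho>"
    unfolding pm_path_def
  proof (intro conjI allI impI)
    show "\<rho> i \<in> W" if "i \<le> Suc (Suc n)" for i
      using that fC C a(1) e(1) by (auto simp: \<rho>_def)
    show "le (\<rho> i) (\<rho> (Suc i)) \<or> le (\<rho> (Suc i)) (\<rho> i)" if i: "i < Suc (Suc n)" for i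
    proof -
      consider "i = 0" | "0 < i" "i \<le> n" | "i = Suc n"
        using i by linarith
      then show ?thesis
      proof cases
        case 2
        then obtain j where "i = Suc j" "j < n" by (cases i) auto
        then show ?thesis using f(3) by (simp add: \<rho>_def comparable_in_def)
      qed (use f a(2) e(2) in \<open>auto simp: \<rho>_def\<close>)
    qed
  qed (use f a(2) e(2) in \<open>auto simp: \<rho>_def\<close>)
  moreover have "\<forall>i. 0 < i \<and> i < Suc (Suc n) \<longrightarrow> \<rho> i \<in> C"
    using fC by (auto simp: \<rho>_def)
  ultimately show ?thesis by (intro exI[of _ "Suc (Suc n)"] exI[of _ \<rho>]) (simp add: \<rho>_def)
qed

text \<open>Otherwise the closures of the cells reachable from \<open>a\<close> and of the remaining cells would
  split \<open>T\<close> into two disjoint relatively closed parts: a point of \<open>T\<close> in both lies in a cell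
  below one of each kind.\<close>

lemma zigzag_cells_meeting_connected:
  assumes K: "simplicial_complex K" and T: "connected T" "T \<subseteq> polyhedron K"
    and a: "a \<in> cells K" "a \<inter> T \<noteq> {}" and c: "c \<in> cells K" "c \<inter> T \<noteq> {}"
  shows "(comparable_in cell_le {c \<in> cells K. c \<inter> T \<noteq> {}})\<^sup>*\<^sup>* a c"
proof (rule ccontr)
  define C where "C = {c \<in> cells K. c \<inter> T \<noteq> {}}"
  let ?R = "comparable_in cell_le C"
  assume "\<not> ?R\<^sup>*\<^sup>* a c"
  define C1 where "C1 = {c \<in> C. ?R\<^sup>*\<^sup>* a c}"
  define A where "A = \<Union> (closure ` C1)"
  define B where "B = \<Union> (closure ` (C - C1))"
  have finC: "finite C" using finite_cells[OF K] by (simp add: C_def)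
  have cell_of_C: "cell_of K y \<in> C" "y \<in> cell_of K y" if "y \<in> T" for y
    using cell_of_polyhedron[OF K] T(2) that by (auto simp: C_def)
  have "closed A" "closed B" unfolding A_def B_def C1_def using finC by (auto intro!: closed_Union)
  moreover have "T \<subseteq> A \<union> B"
  proof
    fix y assume "y \<in> T"
    then show "y \<in> A \<union> B"
      using cell_of_C[of y] closure_subset unfolding A_def B_def by blast
  qed
  moreover have "A \<inter> B \<inter> T = {}"
  proof (rule ccontr)
    assume "A \<inter> B \<inter> T \<noteq> {}"
    then obtain y c1 c2 where y: "y \<in> T" "c1 \<in> C1" "c2 \<in> C - C1"
      "y \<in> closure c1" "y \<in> closure c2"
      unfolding A_def B_def by blast
    have "cell_le (cell_of K y) c1" "cell_le (cell_of K y) c2"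
      using cell_le_if_meets_closure[OF K] cell_of_C[OF y(1)] y C_def C1_def by auto
    then have "?R c1 (cell_of K y)" "?R (cell_of K y) c2"
      using cell_of_C[OF y(1)] y(2,3) by (auto simp: comparable_in_def C1_def)
    moreover have "?R\<^sup>*\<^sup>* a c1" using y(2) by (simp add: C1_def)
    ultimately have "?R\<^sup>*\<^sup>* a c2" by (meson rtranclp.rtrancl_into_rtrancl)
    then show False using y(3) by (simp add: C1_def)
  qed
  moreover have "A \<inter> T \<noteq> {}"
  proof -
    have "a \<in> C1" using a by (simp add: C1_def C_def)
    then show ?thesis using a(2) closure_subset unfolding A_def by blast
  qed
  moreover have "B \<inter> T \<noteq> {}"
  proof -
    have "c \<in> C - C1" using c \<open>\<not> ?R\<^sup>*\<^sup>* a c\<close> by (simp add: C1_def C_def)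
    then show ?thesis using c(2) closure_subset unfolding B_def by blast
  qed
  ultimately show False using T(1) unfolding connected_closed by blast
qed

lemma pm_path_of_eta_reach:
  assumes K: "simplicial_complex K" and reach: "eta_reach K F x z"
  shows "\<exists>l \<rho>. pm_path (cells K) cell_le (cell_of K x) l \<rho> \<and> \<rho> l = cell_of K z \<and>
    (\<forall>i. 0 < i \<and> i < l \<longrightarrow> (\<exists>y\<in>\<rho> i. F y))"
proof -
  obtain \<pi> where \<pi>: "path \<pi>" "path_image \<pi> \<subseteq> polyhedron K" "\<pi> 0 = x" "\<pi> 1 = z"
    and F: "\<forall>r\<in>{0..<1}. F (\<pi> r)"
    using reach unfolding eta_reach_def top_path_iff by (auto simp: pathstart_def)
  define T where "T = \<pi> ` {0..<1}"
  define C where "C = {c \<in> cells K. c \<inter> T \<noteq> {}}"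
  have T: "connected T" "T \<subseteq> polyhedron K"
    using \<pi>(1,2) unfolding T_def path_def path_image_def
    by (auto intro!: connected_continuous_image elim: continuous_on_subset)
  have cell_of_C: "cell_of K y \<in> C" "y \<in> cell_of K y" if "y \<in> T" for y
    using cell_of_polyhedron[OF K] T(2) that by (auto simp: C_def)
  have "x \<in> T" using \<pi>(3) by (force simp: T_def)
  then have a: "cell_of K x \<in> C" using cell_of_C by blast
  have "z \<in> closure T"
  proof -
    have "\<pi> ` closure {0..<1} \<subseteq> closure (\<pi> ` {0..<1})"
      using \<pi>(1) unfolding path_def
      by (intro image_closure_subset) (auto intro: closure_subset[THEN subsetD])
    then show ?thesis using \<pi>(4) by (auto simp: T_def)
  qed
  also have "closure T \<subseteq> \<Union> (closure ` C)"
  proof (rule closure_minimal)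
    show "T \<subseteq> \<Union> (closure ` C)" using cell_of_C closure_subset by blast
    show "closed (\<Union> (closure ` C))" using finite_cells[OF K] by (auto simp: C_def)
  qed
  finally obtain d where d: "d \<in> C" "z \<in> closure d" by blast
  have z: "z \<in> polyhedron K" using eta_reach_polyhedron[OF reach] .
  have "cell_le (cell_of K z) d"
    using cell_le_if_meets_closure[OF K _ _ _ d(2)] cell_of_polyhedron[OF K z] d(1) C_def by blast
  moreover have "(comparable_in cell_le C)\<^sup>*\<^sup>* (cell_of K x) d"
    using zigzag_cells_meeting_connected[OF K T] a d(1) unfolding C_def by blast
  ultimately obtain l \<rho> where \<rho>: "pm_path (cells K) cell_le (cell_of K x) l \<rho>"
    "\<rho> l = cell_of K z" "\<forall>i. 0 < i \<and> i < l \<longrightarrow> \<rho> i \<in> C"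
    using pm_path_of_zigzag[of cell_le C "cell_of K x" d "cells K" "cell_of K z"]
      a cell_le_refl[of "cell_of K x"] cell_of_polyhedron(1)[OF K z] C_def by blast
  moreover have "\<exists>y\<in>c. F y" if "c \<in> C" for c
    using that F by (auto simp: C_def T_def)
  ultimately show ?thesis by blast
qed

lemma iff_cell_of_on_cell:
  assumes K: "simplicial_complex K" and F: "\<And>y. y \<in> polyhedron K \<Longrightarrow> F y \<longleftrightarrow> G (cell_of K y)"
    and c: "c \<in> cells K" "y \<in> c"
  shows "F y \<longleftrightarrow> G c"
proof -
  have "y \<in> polyhedron K" using cells_subset_polyhedron[OF K c(1)] c(2) by blast
  then show ?thesis using F cell_of_eq[OF K c] by simp
qed

lemma eta_reach_iff_pm_path:
  assumes K: "simplicial_complex K" and x: "x \<in> polyhedron K"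
    and F: "\<And>y. y \<in> polyhedron K \<Longrightarrow> F y \<longleftrightarrow> G (cell_of K y)"
    and H: "\<And>y. y \<in> polyhedron K \<Longrightarrow> H y \<longleftrightarrow> G' (cell_of K y)"
  shows "(\<exists>y. eta_reach K F x y \<and> H y) \<longleftrightarrow>
    G (cell_of K x) \<and> (\<exists>l \<rho>. pm_path (cells K) cell_le (cell_of K x) l \<rho> \<and> G' (\<rho> l) \<and>
      (\<forall>i. 0 < i \<and> i < l \<longrightarrow> G (\<rho> i)))"
proof -
  have F_cell: "F y \<longleftrightarrow> G c" if "c \<in> cells K" "y \<in> c" for c y
    by (rule iff_cell_of_on_cell[OF K _ that]) (rule F)
  show ?thesis
  proof
    assume "\<exists>y. eta_reach K F x y \<and> H y"
    then obtain y where y: "eta_reach K F x y" "H y" by blast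
    obtain l \<rho> where \<rho>: "pm_path (cells K) cell_le (cell_of K x) l \<rho>"
      "\<rho> l = cell_of K y" "\<forall>i. 0 < i \<and> i < l \<longrightarrow> (\<exists>y\<in>\<rho> i. F y)"
      using pm_path_of_eta_reach[OF K y(1)] by blast
    have "G (\<rho> i)" if i: "0 < i" "i < l" for i
    proof -
      obtain w where w: "w \<in> \<rho> i" "F w" using \<rho>(3) i by blast
      have "\<rho> i \<in> cells K" using \<rho>(1) i unfolding pm_path_def by simp
      then show ?thesis using F_cell[OF _ w(1)] w(2) by simp
    qed
    moreover have "G (cell_of K x)" using eta_reach_start[OF y(1)] F[OF x] by simp
    moreover have "G' (\<rho> l)" using H[OF eta_reach_polyhedron[OF y(1)]] y(2) \<rho>(2) by simp
    ultimately show "G (cell_of K x) \<and> (\<exists>l \<rho>. pm_path (cells K) cell_le (cell_of K x) l \<rho> \<and>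
      G' (\<rho> l) \<and> (\<forall>i. 0 < i \<and> i < l \<longrightarrow> G (\<rho> i)))"
      using \<rho>(1) by blast
  next
    assume "G (cell_of K x) \<and> (\<exists>l \<rho>. pm_path (cells K) cell_le (cell_of K x) l \<rho> \<and>
      G' (\<rho> l) \<and> (\<forall>i. 0 < i \<and> i < l \<longrightarrow> G (\<rho> i)))"
    then obtain l \<rho> where Gx: "G (cell_of K x)" and \<rho>: "pm_path (cells K) cell_le (cell_of K x) l \<rho>"
      "G' (\<rho> l)" "\<forall>i. 0 < i \<and> i < l \<longrightarrow> G (\<rho> i)" by blast
    have \<rho>_cells: "\<rho> i \<in> cells K" if "i \<le> l" for i
      using \<rho>(1) that unfolding pm_path_def by simp
    obtain z where z: "z \<in> \<rho> l" using cells_nonempty[OF K \<rho>_cells[of l]] by auto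
    have "\<rho> 0 = cell_of K x" using \<rho>(1) unfolding pm_path_def by simp
    then have G_\<rho>: "G (\<rho> i)" if "i < l" for i
      using that Gx \<rho>(3) by (cases "i = 0") auto
    have "F y" if "i < l" "y \<in> \<rho> i" for i y
      using F_cell[OF \<rho>_cells that(2)] G_\<rho>[OF that(1)] that(1) by simp
    have z_poly: "z \<in> polyhedron K" using cells_subset_polyhedron[OF K \<rho>_cells[of l]] z by blast
    have "eta_reach K F x z" by (rule eta_reach_of_pm_path[OF K x \<rho>(1) _ z]) fact
    moreover have "H z" using z_poly H cell_of_eq[OF K \<rho>_cells[of l] z] \<rho>(2) by simp
    ultimately show "\<exists>y. eta_reach K F x y \<and> H y" by blast
  qed
qed

lemma mem_Union_cells_iff_cell_of_subset:
  assumes K: "simplicial_complex K" and C: "C \<subseteq> cells K" and x: "x \<in> polyhedron K"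
  shows "x \<in> \<Union> C \<longleftrightarrow> cell_of K x \<subseteq> \<Union> C"
proof
  assume "x \<in> \<Union> C"
  then obtain c where "c \<in> C" "x \<in> c" by blast
  then show "cell_of K x \<subseteq> \<Union> C" using cell_of_eq[OF K] C by blast
qed (use cell_of_polyhedron(2)[OF K x] in blast)

theorem lemma4:
  fixes K :: "'a::euclidean_space set set" and V :: "'p \<Rightarrow> 'a set"
    and x :: 'a and \<Phi> :: "'p form"
  assumes "polyhedral_model K V"
    and "x \<in> polyhedron K"
    and "eta_formula \<Phi>"
  shows "sat_poly K V x \<Phi> \<longleftrightarrow>
         sat_poset (cells K) cell_le (cell_val K V) (cell_of K x) (enc \<Phi>)"
proof -
  have K: "simplicial_complex K" and V: "\<And>p. \<exists>C. C \<subseteq> cells K \<and> V p = \<Union> C"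
    using assms(1) unfolding polyhedral_model_def by auto
  show ?thesis
    using assms(2,3)
  proof (induction \<Phi> arbitrary: x)
    case (Atom p)
    obtain C where C: "C \<subseteq> cells K" "V p = \<Union> C" using V by blast
    then have "x \<in> V p \<longleftrightarrow> cell_of K x \<subseteq> V p"
      using mem_Union_cells_iff_cell_of_subset[OF K C(1) Atom.prems(1)] by simp
    then show ?case using cell_of_polyhedron(1)[OF K Atom.prems(1)] by (simp add: cell_val_def)
  next
    case (Eta f g)
    then show ?case
      unfolding sat_poly_Eta_iff enc.simps sat_poset.simps
      by (intro eta_reach_iff_pm_path[OF K]) auto
  qed simp_all
qed

end
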